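(* Let $G$ be a graph with a linear order $<$ on $V(G)$ satisfying the X-property, let $s<t$ be vertices with $d^*:=\operatorname{dist}(s,t)<\infty$, and let $P=p_0,p_1,\dots,p_{d^*}$ (with $p_0=s$, $p_{d^*}=t$) be a shortest $s$-$t$ path with $\operatorname{lefti}(P)<\operatorname{righti}(P)$. Then $p_i<p_j$ for all indices $i<\operatorname{lefti}(P)<j$, and $p_i<p_j$ for all indices $i<\operatorname{righti}(P)<j$.
   Context: The X-property: for all vertices $p<q<r<s$, if $\{p,r\}\in E(G)$ and $\{q,s\}\in E(G)$ then $\{p,s\}\in E(G)$. $\operatorname{dist}$ is the number of edges of a shortest path. $\operatorname{lefti}(P)$ is the index $i$ such that $p_i$ is the leftmost (w.r.t. $<$) vertex of $P$, and $\operatorname{righti}(P)$ the index of the rightmost vertex of $P$. *)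

theory Defs
  imports Main
begin

definition graph :: "'a set \<Rightarrow> ('a \<Rightarrow> 'a \<Rightarrow> bool) \<Rightarrow> bool" where
  "graph V E \<longleftrightarrow> finite V \<and> (\<forall>u v. E u v \<longrightarrow> u \<in> V \<and> v \<in> V)
     \<and> (\<forall>u v. E u v \<longrightarrow> E v u) \<and> (\<forall>u. \<not> E u u)"

definition X_property :: "'a::linorder set \<Rightarrow> ('a \<Rightarrow> 'a \<Rightarrow> bool) \<Rightarrow> bool" where
  "X_property V E \<longleftrightarrow> (\<forall>p\<in>V. \<forall>q\<in>V. \<forall>r\<in>V. \<forall>s\<in>V.
     p < q \<and> q < r \<and> r < s \<and> E p r \<and> E q s \<longrightarrow> E p s)"

text \<open>A walk given as the list of its vertices p_0,...,p_k; it has k = length - 1 edges.\<close>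
definition walk :: "('a \<Rightarrow> 'a \<Rightarrow> bool) \<Rightarrow> 'a list \<Rightarrow> 'a \<Rightarrow> 'a \<Rightarrow> bool" where
  "walk E P s t \<longleftrightarrow> P \<noteq> [] \<and> hd P = s \<and> last P = t
     \<and> (\<forall>i. Suc i < length P \<longrightarrow> E (P ! i) (P ! Suc i))"

definition connected_pair :: "('a \<Rightarrow> 'a \<Rightarrow> bool) \<Rightarrow> 'a \<Rightarrow> 'a \<Rightarrow> bool" where
  "connected_pair E s t \<longleftrightarrow> (\<exists>P. walk E P s t)"

text \<open>Distance: number of edges of a shortest walk (meaningful when connected_pair holds).\<close>
definition dist :: "('a \<Rightarrow> 'a \<Rightarrow> bool) \<Rightarrow> 'a \<Rightarrow> 'a \<Rightarrow> nat" where
  "dist E s t = (LEAST n. \<exists>P. walk E P s t \<and> length P = Suc n)"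

definition shortest_path :: "('a \<Rightarrow> 'a \<Rightarrow> bool) \<Rightarrow> 'a list \<Rightarrow> 'a \<Rightarrow> 'a \<Rightarrow> bool" where
  "shortest_path E P s t \<longleftrightarrow> walk E P s t \<and> length P = Suc (dist E s t)"

definition lefti :: "'a::linorder list \<Rightarrow> nat" where
  "lefti P = (THE i. i < length P \<and> P ! i = Min (set P))"

definition righti :: "'a::linorder list \<Rightarrow> nat" where
  "righti P = (THE i. i < length P \<and> P ! i = Max (set P))"

end

theory Submission
  imports Defs "HOL-Library.Dual_Ordered_Lattice"
begin

(* A shortest path p_0, ..., p_n has distinct vertices and no chords, so the X-property becomes a
   statement about the sequence alone: if two steps p_a p_c and p_b p_d interleave as
   p_a < p_b < p_c < p_d, then a and d are consecutive indices.
   Let l and r be the positions of the minimum and the maximum, and suppose some vertex before l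
   lies above the lowest vertex p_j0 after l.  The last step before l that crosses the level p_j0
   goes down from p_a to p_(a+1); interleaving it with the steps between p_j0 and p_r forces
   l = a + 1, r = l + 1 and p_(r+1) < p_a.  Interleaving further steps with p_a p_l and p_r p_(r+1)
   shows that the whole prefix up to a lies above p_(r+1) and that p_n < p_a; then the prefix step
   crossing the level p_n cannot be interleaved with the suffix after r, so p_n < p_0, contradicting
   s < t.  The claim about righti follows by reversing both the path and the order. *)

instance dual :: (linorder) linorder
  by standard (simp add: dual_less_eq_iff linear)

definition consecutive :: "nat \<Rightarrow> nat \<Rightarrow> bool" where
  "consecutive i j \<longleftrightarrow> j = Suc i \<or> i = Suc j"

lemma nat_entry_step:
  assumes "k0 \<le> k1" "\<not> P k0" "P k1"
  obtains k where "k0 \<le> k" "k < k1" "\<not> P k" "P (Suc k)"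
proof -
  obtain i where "i < k1 - k0" "\<not> P (k0 + i)" "P (k0 + Suc i)"
    using ex_least_nat_less[of "\<lambda>i. P (k0 + i)" "k1 - k0"] assms by auto
  then show thesis
    using that[of "k0 + i"] by auto
qed

lemma nat_exit_step:
  assumes "k0 \<le> k1" "P k0" "\<not> P k1"
  obtains k where "k0 \<le> k" "k < k1" "P k" "\<not> P (Suc k)"
  using nat_entry_step[of k0 k1 "\<lambda>k. \<not> P k"] assms by blast

lemma walk_iff_successively:
  "walk E P s t \<longleftrightarrow> P \<noteq> [] \<and> hd P = s \<and> last P = t \<and> successively E P"
  by (auto simp: walk_def successively_conv_nth)

lemma walk_shortcut:
  assumes "walk E P s t" "a < b" "b < length P" "E (P ! a) (P ! b)"
  shows "walk E (take (Suc a) P @ drop b P) s t"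
proof -
  have "successively E (take (Suc a) P) \<and> successively E (drop b P)"
    using assms(1) successively_append_iff[of E "take (Suc a) P" "drop (Suc a) P"]
      successively_append_iff[of E "take b P" "drop b P"]
    by (simp add: walk_iff_successively)
  moreover have "last (take (Suc a) P) = P ! a" "hd (drop b P) = P ! b"
    using assms by (simp_all add: take_Suc_conv_app_nth hd_drop_conv_nth)
  ultimately show ?thesis
    using assms by (auto simp: walk_iff_successively successively_append_iff)
qed

lemma walk_remove_loop:
  assumes "walk E P s t" "a < b" "b < length P" "P ! a = P ! b"
  shows "walk E (take a P @ drop b P) s t"
proof (cases a)
  case 0
  have "successively E (drop b P)"
    using assms(1) successively_append_iff[of E "take b P" "drop b P"]
    by (simp add: walk_iff_successively)
  then show ?thesis
    using assms 0 by (auto simp: walk_iff_successively hd_drop_conv_nth last_drop hd_conv_nth)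
next
  case (Suc a')
  have "E (P ! a') (P ! Suc a')"
    using assms(1-3) Suc by (simp add: walk_def)
  then show ?thesis
    using walk_shortcut[of E P s t a' b] assms Suc by simp
qed

lemma shortest_path_length_le:
  assumes "shortest_path E P s t" "walk E Q s t"
  shows "length P \<le> length Q"
proof -
  have "length Q = Suc (length Q - 1)"
    using assms(2) by (simp add: walk_def)
  then have "dist E s t \<le> length Q - 1"
    unfolding dist_def using assms(2) by (intro Least_le) metis
  then show ?thesis
    using assms(1) \<open>length Q = _\<close> by (simp add: shortest_path_def)
qed

lemma shortest_path_distinct:
  assumes "shortest_path E P s t"
  shows "distinct P"
proof (rule ccontr)
  assume "\<not> distinct P"
  then obtain a b where ab: "a < b" "b < length P" "P ! a = P ! b"
    by (metis distinct_conv_nth linorder_neq_iff)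
  then have "walk E (take a P @ drop b P) s t"
    using assms walk_remove_loop by (fastforce simp: shortest_path_def)
  then show False
    using shortest_path_length_le[OF assms] ab by fastforce
qed

lemma shortest_path_chord_consecutive:
  assumes "graph V E" "shortest_path E P s t" "a < length P" "b < length P" "E (P ! a) (P ! b)"
  shows "consecutive a b"
proof -
  have short: "j = Suc i" if "i < j" "j < length P" "E (P ! i) (P ! j)" for i j
  proof -
    have "walk E (take (Suc i) P @ drop j P) s t"
      using assms(2) that walk_shortcut by (fastforce simp: shortest_path_def)
    then show ?thesis
      using shortest_path_length_le[OF assms(2)] that by fastforce
  qed
  have "E u v \<Longrightarrow> E v u" "\<not> E u u" for u v
    using assms(1) by (auto simp: graph_def)
  then show ?thesis
    using short[of a b] short[of b a] assms(3-5) linorder_neq_iff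
    unfolding consecutive_def by metis
qed

(* f 0, ..., f n is the vertex sequence of an induced path: adjacent vertices are exactly those at
   consecutive positions, so the X-property takes the form of crossing. *)
locale induced_x_path =
  fixes f :: "nat \<Rightarrow> 'a::linorder" and n :: nat
  assumes distinct_values: "a \<le> n \<Longrightarrow> b \<le> n \<Longrightarrow> a \<noteq> b \<Longrightarrow> f a \<noteq> f b"
    and crossing: "a \<le> n \<Longrightarrow> b \<le> n \<Longrightarrow> c \<le> n \<Longrightarrow> d \<le> n \<Longrightarrow>
      f a < f b \<Longrightarrow> f b < f c \<Longrightarrow> f c < f d \<Longrightarrow>
      consecutive a c \<Longrightarrow> consecutive b d \<Longrightarrow> consecutive a d"
begin

lemma less_values_cases: "a \<le> n \<Longrightarrow> b \<le> n \<Longrightarrow> a \<noteq> b \<Longrightarrow> f a < f b \<or> f b < f a"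
  using distinct_values linorder_neq_iff by blast

end

locale induced_x_path_extremes = induced_x_path +
  fixes l r :: nat
  assumes min_at_l: "k \<le> n \<Longrightarrow> f l \<le> f k"
    and max_at_r: "k \<le> n \<Longrightarrow> f k \<le> f r"
    and l_less_r: "l < r" and r_le_n: "r \<le> n"
begin

lemma above_min: "k \<le> n \<Longrightarrow> k \<noteq> l \<Longrightarrow> f l < f k"
  using min_at_l distinct_values[of l k] l_less_r r_le_n by fastforce

lemma below_max: "k \<le> n \<Longrightarrow> k \<noteq> r \<Longrightarrow> f k < f r"
  using max_at_r distinct_values[of k r] r_le_n by fastforce

lemma turn_after_min:
  assumes j0: "l < j0" "j0 \<le> n" and j0_min: "\<And>k. l < k \<Longrightarrow> k \<le> n \<Longrightarrow> f j0 \<le> f k"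
    and a: "a < l" "f (Suc a) < f j0" "f j0 < f a"
  shows "Suc a = l \<and> Suc l = r \<and> Suc r \<le> n \<and> f (Suc r) < f a"
proof -
  let ?Q = "\<lambda>k. f (Suc a) < f k \<and> f k < f a"
  have "?Q j0"
    using a by simp
  have "\<not> ?Q r"
    using below_max[of a] l_less_r r_le_n a(1) by auto
  show ?thesis
  proof (cases "j0 \<le> r")
    case True
    obtain k where k: "j0 \<le> k" "k < r" "?Q k" "\<not> ?Q (Suc k)"
      by (rule nat_exit_step[OF True \<open>?Q j0\<close> \<open>\<not> ?Q r\<close>])
    have "Suc k \<le> n" "a \<noteq> Suc k"
      using k(2) r_le_n a(1) j0(1) k(1) by auto
    have "f (Suc a) < f (Suc k)"
      using j0_min[OF _ \<open>Suc k \<le> n\<close>] k(1) j0(1) a(2) by simp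
    then have "f a < f (Suc k)"
      using k(4) less_values_cases[OF _ \<open>Suc k \<le> n\<close> \<open>a \<noteq> Suc k\<close>] a(1) l_less_r r_le_n by auto
    then have "consecutive (Suc a) (Suc k)"
      using crossing[of "Suc a" k a "Suc k"] k(3) \<open>Suc k \<le> n\<close> a(1) l_less_r r_le_n
      by (simp add: consecutive_def)
    then show ?thesis
      using k(1) j0(1) a(1) by (auto simp: consecutive_def)
  next
    case False
    then have "r \<le> j0"
      by simp
    obtain k where k: "r \<le> k" "k < j0" "\<not> ?Q k" "?Q (Suc k)"
      by (rule nat_entry_step[OF \<open>r \<le> j0\<close> \<open>\<not> ?Q r\<close> \<open>?Q j0\<close>])
    have "k \<le> n" "a \<noteq> k"
      using k(1,2) j0(2) a(1) l_less_r by auto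
    have "f (Suc a) < f k"
      using j0_min[OF _ \<open>k \<le> n\<close>] k(1) l_less_r a(2) by simp
    then have "f a < f k"
      using k(3) less_values_cases[OF _ \<open>k \<le> n\<close> \<open>a \<noteq> k\<close>] a(1) l_less_r r_le_n by auto
    then have "consecutive (Suc a) k"
      using crossing[of "Suc a" "Suc k" a k] k(2,4) j0(2) \<open>k \<le> n\<close> a(1) l_less_r r_le_n
      by (simp add: consecutive_def)
    then have "Suc a = l" "Suc l = r" "k = r"
      using k(1) a(1) l_less_r by (auto simp: consecutive_def)
    then show ?thesis
      using k j0(2) by simp
  qed
qed

context
  fixes a :: nat
  assumes turn: "Suc a = l" "Suc l = r" "Suc r \<le> n" "f (Suc r) < f a"
begin

lemma turn_prefix_above:
  assumes "k \<le> a"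
  shows "f (Suc r) < f k"
proof (rule ccontr)
  assume "\<not> f (Suc r) < f k"
  then have "f k < f (Suc r)"
    using less_values_cases[of k "Suc r"] assms turn by auto
  let ?R = "\<lambda>k. f (Suc r) < f k \<and> f k < f r"
  have "\<not> ?R k" "?R a"
    using \<open>f k < f (Suc r)\<close> turn below_max[of a] by auto
  obtain m where m: "k \<le> m" "m < a" "\<not> ?R m" "?R (Suc m)"
    by (rule nat_entry_step[OF assms \<open>\<not> ?R k\<close> \<open>?R a\<close>])
  have "m \<le> n" "m \<noteq> r" "m \<noteq> Suc r"
    using m(2) turn by auto
  then have "f m < f (Suc r)"
    using m(3) below_max[of m] less_values_cases[of m "Suc r"] turn(3) by auto
  then have "consecutive m r"
    using crossing[of m "Suc r" "Suc m" r] m(2,4) turn by (simp add: consecutive_def)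
  then show False
    using m(2) turn by (auto simp: consecutive_def)
qed

lemma turn_end_below: "f n < f a"
proof (rule ccontr)
  assume "\<not> f n < f a"
  then have "f a < f n"
    using less_values_cases[of a n] turn by auto
  let ?R = "\<lambda>k. f l < f k \<and> f k < f a"
  have "?R (Suc r)" "\<not> ?R n"
    using turn above_min[of "Suc r"] \<open>f a < f n\<close> by auto
  obtain m where m: "Suc r \<le> m" "m < n" "?R m" "\<not> ?R (Suc m)"
    by (rule nat_exit_step[OF turn(3) \<open>?R (Suc r)\<close> \<open>\<not> ?R n\<close>])
  have "Suc m \<le> n" "Suc m \<noteq> l" "Suc m \<noteq> a"
    using m(1,2) turn by auto
  then have "f a < f (Suc m)"
    using m(4) turn above_min[of "Suc m"] less_values_cases[of a "Suc m"] by auto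
  then have "consecutive l (Suc m)"
    using crossing[of l m a "Suc m"] m(2,3) turn by (simp add: consecutive_def)
  then show False
    using m(1) turn by (auto simp: consecutive_def)
qed

lemma turn_end_below_start: "f n < f 0"
proof (rule ccontr)
  assume "\<not> f n < f 0"
  then have "f 0 < f n"
    using less_values_cases[of 0 n] turn by auto
  let ?B = "{k. k \<le> a \<and> f k < f n}"
  define b where "b = Max ?B"
  have "finite ?B" "0 \<in> ?B"
    using \<open>f 0 < f n\<close> by auto
  then have "b \<in> ?B"
    unfolding b_def by (intro Max_in) auto
  then have "b < a" "f b < f n"
    using turn_end_below by (auto simp: le_less)
  have "Suc b \<notin> ?B"
    using Max_ge[OF \<open>finite ?B\<close>, of "Suc b"] unfolding b_def[symmetric] by auto
  then have "f n < f (Suc b)"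
    using \<open>b < a\<close> turn less_values_cases[of n "Suc b"] by auto
  let ?R = "\<lambda>k. f b < f k \<and> f k < f (Suc b)"
  have "\<not> ?R (Suc r)" "?R n"
    using turn_prefix_above[of b] \<open>b < a\<close> \<open>f b < f n\<close> \<open>f n < f (Suc b)\<close> by auto
  obtain m where m: "Suc r \<le> m" "m < n" "\<not> ?R m" "?R (Suc m)"
    by (rule nat_entry_step[OF turn(3) \<open>\<not> ?R (Suc r)\<close> \<open>?R n\<close>])
  have "m \<noteq> b" "m \<noteq> Suc b"
    using m(1) turn \<open>b < a\<close> by auto
  then have "f m < f b \<or> f (Suc b) < f m"
    using m(2,3) turn \<open>b < a\<close> less_values_cases[of m b] less_values_cases[of m "Suc b"] by auto
  then have "consecutive m (Suc b) \<or> consecutive b m"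
    using crossing[of m b "Suc m" "Suc b"] crossing[of b "Suc m" "Suc b" m] m(2,4) turn \<open>b < a\<close>
    by (auto simp: consecutive_def)
  then show False
    using m(1) turn \<open>b < a\<close> by (auto simp: consecutive_def)
qed

end

theorem before_min_below_after_min:
  assumes "f 0 < f n" "i < l" "l < j" "j \<le> n"
  shows "f i < f j"
proof (rule ccontr)
  assume "\<not> f i < f j"
  then have "f j < f i"
    using less_values_cases[of i j] assms by auto
  obtain j0 where "is_arg_min f (\<lambda>k. k \<in> {l<..n}) j0"
    using ex_is_arg_min_if_finite[of "{l<..n}" f] assms(3,4) by auto
  then have j0: "l < j0" "j0 \<le> n" and j0_min: "\<And>k. l < k \<Longrightarrow> k \<le> n \<Longrightarrow> f j0 \<le> f k"
    by (auto simp: is_arg_min_linorder)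
  have "f j0 < f i"
    using j0_min[of j] assms \<open>f j < f i\<close> by simp
  let ?A = "{k. k < l \<and> f j0 < f k}"
  define a where "a = Max ?A"
  have "finite ?A" "i \<in> ?A"
    using assms(2) \<open>f j0 < f i\<close> by auto
  then have "a \<in> ?A"
    unfolding a_def by (intro Max_in) auto
  then have a: "a < l" "f j0 < f a"
    by auto
  have "f (Suc a) < f j0"
  proof (cases "Suc a = l")
    case True
    then show ?thesis
      using above_min[of j0] j0 by simp
  next
    case False
    then have "\<not> f j0 < f (Suc a)"
      using Max_ge[OF \<open>finite ?A\<close>, of "Suc a"] a(1) unfolding a_def[symmetric] by auto
    then show ?thesis
      using less_values_cases[of j0 "Suc a"] j0 a(1) l_less_r by auto
  qed
  then have "Suc a = l \<and> Suc l = r \<and> Suc r \<le> n \<and> f (Suc r) < f a"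
    using turn_after_min j0 j0_min a by blast
  then have "f n < f 0"
    using turn_end_below_start by blast
  then show False
    using assms(1) by simp
qed

theorem before_max_below_after_max:
  assumes "f 0 < f n" "i < r" "r < j" "j \<le> n"
  shows "f i < f j"
proof -
  \<comment> \<open>Reversing the path and the order exchanges the roles of l and r.\<close>
  interpret mirror: induced_x_path_extremes "\<lambda>k. dual (f (n - k))" n "n - r" "n - l"
  proof unfold_locales
    fix a b c d
    assume "a \<le> n" "b \<le> n" "c \<le> n" "d \<le> n"
      and "dual (f (n - a)) < dual (f (n - b))" "dual (f (n - b)) < dual (f (n - c))"
        "dual (f (n - c)) < dual (f (n - d))" "consecutive a c" "consecutive b d"
    moreover have "consecutive (n - d) (n - b)" "consecutive (n - c) (n - a)"
      using \<open>consecutive a c\<close> \<open>consecutive b d\<close> \<open>a \<le> n\<close> \<open>b \<le> n\<close> \<open>c \<le> n\<close> \<open>d \<le> n\<close>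
      by (auto simp: consecutive_def)
    ultimately have "consecutive (n - d) (n - a)"
      using crossing[of "n - d" "n - c" "n - b" "n - a"] by simp
    then show "consecutive a d"
      using \<open>a \<le> n\<close> \<open>d \<le> n\<close> by (auto simp: consecutive_def)
  qed (use distinct_values min_at_l max_at_r l_less_r r_le_n in auto)
  have "dual (f (n - (n - j))) < dual (f (n - (n - i)))"
    using mirror.before_min_below_after_min[of "n - j" "n - i"] assms by simp
  then show ?thesis
    using assms by simp
qed

end

lemma shortest_path_induced_x_path:
  assumes "graph V E" "X_property V E" "shortest_path E P s t"
  shows "induced_x_path (nth P) (length P - 1)"
proof unfold_locales
  have "P \<noteq> []" "distinct P"
    using assms(3) shortest_path_distinct[OF assms(3)] by (auto simp: shortest_path_def walk_def)
  then show "P ! a \<noteq> P ! b" if "a \<le> length P - 1" "b \<le> length P - 1" "a \<noteq> b" for a b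
    using that by (simp add: nth_eq_iff_index_eq)
next
  fix a b c d
  assume indices: "a \<le> length P - 1" "b \<le> length P - 1" "c \<le> length P - 1" "d \<le> length P - 1"
    and order: "P ! a < P ! b" "P ! b < P ! c" "P ! c < P ! d"
    and steps: "consecutive a c" "consecutive b d"
  have "length P \<noteq> 0"
    using assms(3) by (simp add: shortest_path_def walk_def)
  then have lengths: "a < length P" "b < length P" "c < length P" "d < length P"
    using indices by arith+
  have edge: "E (P ! i) (P ! j)" if "consecutive i j" "i < length P" "j < length P" for i j
    using that assms(1,3) unfolding consecutive_def graph_def shortest_path_def walk_def by auto
  have "E (P ! a) (P ! c)" "E (P ! b) (P ! d)"
    using edge steps lengths by blast+
  moreover from this have "P ! a \<in> V" "P ! b \<in> V" "P ! c \<in> V" "P ! d \<in> V"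
    using assms(1) unfolding graph_def by blast+
  ultimately have "E (P ! a) (P ! d)"
    using assms(2) order unfolding X_property_def by blast
  then show "consecutive a d"
    using shortest_path_chord_consecutive[OF assms(1,3)] lengths by blast
qed

lemma distinct_nth_The_eq:
  assumes "distinct P" "x \<in> set P"
  shows "(THE i. i < length P \<and> P ! i = x) < length P \<and> P ! (THE i. i < length P \<and> P ! i = x) = x"
  by (rule theI') (use assms in \<open>metis in_set_conv_nth nth_eq_iff_index_eq\<close>)

lemma shortest_path_induced_x_path_extremes:
  assumes "graph V E" "X_property V E" "shortest_path E P s t" "lefti P < righti P"
  shows "induced_x_path_extremes (nth P) (length P - 1) (lefti P) (righti P)"
proof -
  have "P \<noteq> []" "distinct P"
    using assms(3) shortest_path_distinct[OF assms(3)] by (auto simp: shortest_path_def walk_def)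
  then have lefti: "lefti P < length P" "P ! lefti P = Min (set P)"
    and righti: "righti P < length P" "P ! righti P = Max (set P)"
    using distinct_nth_The_eq[OF \<open>distinct P\<close>] unfolding lefti_def righti_def by auto
  interpret induced_x_path "nth P" "length P - 1"
    by (rule shortest_path_induced_x_path[OF assms(1-3)])
  show ?thesis
  proof unfold_locales
    fix k
    assume "k \<le> length P - 1"
    with \<open>P \<noteq> []\<close> have "k < length P"
      by (cases "length P") auto
    then have "P ! k \<in> set P"
      by (rule nth_mem)
    then show "P ! lefti P \<le> P ! k" "P ! k \<le> P ! righti P"
      using lefti righti by simp_all
  qed (use assms(4) righti in simp_all)
qed

theorem lemma8:
  fixes V :: "'a::linorder set" and E :: "'a \<Rightarrow> 'a \<Rightarrow> bool" and s t :: 'a and P :: "'a list"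
  assumes "graph V E" and "X_property V E"
    and "s \<in> V" and "t \<in> V" and "s < t"
    and "connected_pair E s t"
    and "shortest_path E P s t"
    and "lefti P < righti P"
  shows "(\<forall>i j. i < lefti P \<and> lefti P < j \<and> j < length P \<longrightarrow> P ! i < P ! j)
       \<and> (\<forall>i j. i < righti P \<and> righti P < j \<and> j < length P \<longrightarrow> P ! i < P ! j)"
proof -
  interpret induced_x_path_extremes "nth P" "length P - 1" "lefti P" "righti P"
    using shortest_path_induced_x_path_extremes[OF assms(1,2,7,8)] .
  have "P \<noteq> []" "hd P = s" "last P = t"
    using assms(7) by (auto simp: shortest_path_def walk_def)
  then have ends: "P ! 0 < P ! (length P - 1)"
    using assms(5) by (simp add: hd_conv_nth last_conv_nth)
  show ?thesis
  proof (intro conjI allI impI)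
    fix i j
    assume "i < lefti P \<and> lefti P < j \<and> j < length P"
    moreover from this have "j \<le> length P - 1"
      by arith
    ultimately show "P ! i < P ! j"
      using before_min_below_after_min[OF ends, of i j] by blast
  next
    fix i j
    assume "i < righti P \<and> righti P < j \<and> j < length P"
    moreover from this have "j \<le> length P - 1"
      by arith
    ultimately show "P ! i < P ! j"
      using before_max_below_after_max[OF ends, of i j] by blast
  qed
qed

end
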